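(* Let $\mathcal{G}$ be a hereditary class of finite graphs. Then the following statements are equivalent. (1) $\mathcal{G}$ is clique-sparse, i.e. there is a constant $k$ such that $\widetilde{\omega}(G)\le k$ and $\mathsf{cideg}(G)\le k$ for all $G\in\mathcal{G}$. (2) There is a constant $d$ such that for every graph $G\in\mathcal{G}$, the graph obtained from $G$ by successively identifying true twins has maximum degree at most $d$. (3) Both $\widetilde{\omega}$ and $\alpha^{\ast}$ are bounded on $\mathcal{G}$. (4) Both $\widetilde{\omega}$ and $\theta^{\ast}$ are bounded on $\mathcal{G}$. (5) $\mathsf{cdeg}$ is bounded on $\mathcal{G}$. (6) There is an $n$ such that no graph in $\mathcal{G}$ contains any of $\mathscr{S}_n$, $\mathscr{M}^{KI}_n$, $\mathscr{M}^{KK}_n$, $\mathscr{A}^{KK}_n$, $\mathscr{H}^{KK}_n$ as an induced subgraph (i.e. $\mathcal{G}$ excludes a star, a split matching, a matching between two cliques, an anti-matching between two cliques, and a half-graph between two cliques as induced subgraphs).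
   Context: All graphs are finite and simple; a class is hereditary if it is closed under taking induced subgraphs. Two vertices are true twins if they have the same closed neighbourhood; identifying true twins means replacing them by a single vertex with that neighbourhood. Two vertices are equivalent if they lie in exactly the same maximal cliques. $\widetilde{\omega}(G)$ is the maximum over maximal cliques $K$ of the number of equivalence classes meeting $K$; $\mathsf{cideg}(G)$ is the maximum over vertices $v$ of the number of maximal cliques containing $v$; $\mathsf{cdeg}(G)$ is the maximum over maximal cliques $K$ of the number of other maximal cliques intersecting $K$. $\alpha^{\ast}(G)=\max_v \alpha(G[N[v]])$ and $\theta^{\ast}(G)=\max_v\theta(G[N[v]])$, where $\theta$ is the clique-cover number. A parameter is bounded on $\mathcal{G}$ if some constant bounds it on all members. For ordered sets $X=\{x_1,\dots,x_n\}$, $Y=\{y_1,\dots,y_n\}$ and a vertex $c$: $\mathscr{S}_n$ is the star with centre $c$ and leaves $X$; $\mathscr{M}^{KI}_n$ has edges $x_iy_i$ ($i\in[n]$) and $X$ a clique ($Y$ independent); $\mathscr{M}^{KK}_n$ has edges $x_iy_i$ and both $X$ and $Y$ cliques; $\mathscr{A}^{KK}_n$ has edges $x_iy_j$ for $i\neq j$ and both $X,Y$ cliques; $\mathscr{H}^{KK}_n$ has edges $x_iy_j$ for $i\le j$ and both $X,Y$ cliques. *)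

theory Defs
  imports Main
begin

type_synonym 'a graph = "'a set \<times> 'a set set"

definition verts :: "'a graph \<Rightarrow> 'a set" where "verts G = fst G"
definition edges :: "'a graph \<Rightarrow> 'a set set" where "edges G = snd G"

definition wf_graph :: "'a graph \<Rightarrow> bool" where
  "wf_graph G \<longleftrightarrow> finite (verts G) \<and> (\<forall>e\<in>edges G. e \<subseteq> verts G \<and> card e = 2)"

definition adj :: "'a graph \<Rightarrow> 'a \<Rightarrow> 'a \<Rightarrow> bool" where
  "adj G u v \<longleftrightarrow> {u, v} \<in> edges G"

definition induced_subgraph :: "'a graph \<Rightarrow> 'a set \<Rightarrow> 'a graph" where
  "induced_subgraph G S = (S, {e \<in> edges G. e \<subseteq> S})"

definition hereditary :: "'a graph set \<Rightarrow> bool" where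
  "hereditary \<G> \<longleftrightarrow> (\<forall>G\<in>\<G>. \<forall>S. S \<subseteq> verts G \<longrightarrow> induced_subgraph G S \<in> \<G>)"

definition closed_nbhd :: "'a graph \<Rightarrow> 'a \<Rightarrow> 'a set" where
  "closed_nbhd G v = insert v {u \<in> verts G. adj G v u}"

definition clique :: "'a graph \<Rightarrow> 'a set \<Rightarrow> bool" where
  "clique G K \<longleftrightarrow> K \<subseteq> verts G \<and> (\<forall>u\<in>K. \<forall>v\<in>K. u \<noteq> v \<longrightarrow> adj G u v)"

definition maximal_clique :: "'a graph \<Rightarrow> 'a set \<Rightarrow> bool" where
  "maximal_clique G K \<longleftrightarrow> clique G K \<and> (\<forall>K'. clique G K' \<and> K \<subseteq> K' \<longrightarrow> K' = K)"

definition independent :: "'a graph \<Rightarrow> 'a set \<Rightarrow> bool" where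
  "independent G I \<longleftrightarrow> I \<subseteq> verts G \<and> (\<forall>u\<in>I. \<forall>v\<in>I. \<not> adj G u v)"

definition max_cliques_at :: "'a graph \<Rightarrow> 'a \<Rightarrow> 'a set set" where
  "max_cliques_at G v = {K. maximal_clique G K \<and> v \<in> K}"

definition clique_equiv_class :: "'a graph \<Rightarrow> 'a \<Rightarrow> 'a set" where
  "clique_equiv_class G v = {u \<in> verts G. max_cliques_at G u = max_cliques_at G v}"

definition omega_tilde :: "'a graph \<Rightarrow> nat" where
  "omega_tilde G = Max (insert 0
     {card (clique_equiv_class G ` K) | K. maximal_clique G K})"

definition cideg :: "'a graph \<Rightarrow> nat" where
  "cideg G = Max (insert 0 {card (max_cliques_at G v) | v. v \<in> verts G})"

definition cdeg :: "'a graph \<Rightarrow> nat" where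
  "cdeg G = Max (insert 0
     {card {K'. maximal_clique G K' \<and> K' \<noteq> K \<and> K' \<inter> K \<noteq> {}} | K. maximal_clique G K})"

definition independence_number :: "'a graph \<Rightarrow> nat" where
  "independence_number G = Max (insert 0 {card I | I. independent G I})"

definition clique_cover_number :: "'a graph \<Rightarrow> nat" where
  "clique_cover_number G = (LEAST k. \<exists>\<K>. finite \<K> \<and> card \<K> = k \<and>
      (\<forall>K\<in>\<K>. clique G K) \<and> \<Union>\<K> = verts G)"

definition alpha_star :: "'a graph \<Rightarrow> nat" where
  "alpha_star G = Max (insert 0
     {independence_number (induced_subgraph G (closed_nbhd G v)) | v. v \<in> verts G})"

definition theta_star :: "'a graph \<Rightarrow> nat" where
  "theta_star G = Max (insert 0
     {clique_cover_number (induced_subgraph G (closed_nbhd G v)) | v. v \<in> verts G})"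

definition max_degree :: "'a graph \<Rightarrow> nat" where
  "max_degree G = Max (insert 0 {card {u \<in> verts G. adj G v u} | v. v \<in> verts G})"

text \<open>The graph obtained by (successively) identifying true twins: the quotient by the
  relation of having equal closed neighbourhoods.\<close>
definition twin_class :: "'a graph \<Rightarrow> 'a \<Rightarrow> 'a set" where
  "twin_class G v = {u \<in> verts G. closed_nbhd G u = closed_nbhd G v}"

definition twin_reduction :: "'a graph \<Rightarrow> 'a set graph" where
  "twin_reduction G =
     (twin_class G ` verts G,
      {{A, B} | A B. A \<in> twin_class G ` verts G \<and> B \<in> twin_class G ` verts G \<and> A \<noteq> B \<and>
                     (\<exists>a\<in>A. \<exists>b\<in>B. adj G a b)})"

definition bounded_on :: "'a graph set \<Rightarrow> ('a graph \<Rightarrow> nat) \<Rightarrow> bool" where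
  "bounded_on \<G> f \<longleftrightarrow> (\<exists>k. \<forall>G\<in>\<G>. f G \<le> k)"

definition contains_induced :: "'a graph \<Rightarrow> 'b graph \<Rightarrow> bool" where
  "contains_induced G H \<longleftrightarrow> (\<exists>f. inj_on f (verts H) \<and> f ` verts H \<subseteq> verts G \<and>
      (\<forall>u\<in>verts H. \<forall>v\<in>verts H. adj G (f u) (f v) \<longleftrightarrow> adj H u v))"

datatype pvert = Cv | Xv nat | Yv nat

definition XY :: "nat \<Rightarrow> pvert set" where
  "XY n = Xv ` {1..n} \<union> Yv ` {1..n}"

definition star_graph :: "nat \<Rightarrow> pvert graph" where
  "star_graph n = (insert Cv (Xv ` {1..n}), {{Cv, Xv i} | i. i \<in> {1..n}})"

definition matching_KI :: "nat \<Rightarrow> pvert graph" where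
  "matching_KI n = (XY n,
     {{Xv i, Yv i} | i. i \<in> {1..n}} \<union> {{Xv i, Xv j} | i j. i \<in> {1..n} \<and> j \<in> {1..n} \<and> i \<noteq> j})"

definition matching_KK :: "nat \<Rightarrow> pvert graph" where
  "matching_KK n = (XY n,
     {{Xv i, Yv i} | i. i \<in> {1..n}} \<union> {{Xv i, Xv j} | i j. i \<in> {1..n} \<and> j \<in> {1..n} \<and> i \<noteq> j}
     \<union> {{Yv i, Yv j} | i j. i \<in> {1..n} \<and> j \<in> {1..n} \<and> i \<noteq> j})"

definition antimatching_KK :: "nat \<Rightarrow> pvert graph" where
  "antimatching_KK n = (XY n,
     {{Xv i, Yv j} | i j. i \<in> {1..n} \<and> j \<in> {1..n} \<and> i \<noteq> j}
     \<union> {{Xv i, Xv j} | i j. i \<in> {1..n} \<and> j \<in> {1..n} \<and> i \<noteq> j}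
     \<union> {{Yv i, Yv j} | i j. i \<in> {1..n} \<and> j \<in> {1..n} \<and> i \<noteq> j})"

definition halfgraph_KK :: "nat \<Rightarrow> pvert graph" where
  "halfgraph_KK n = (XY n,
     {{Xv i, Yv j} | i j. i \<in> {1..n} \<and> j \<in> {1..n} \<and> i \<le> j}
     \<union> {{Xv i, Xv j} | i j. i \<in> {1..n} \<and> j \<in> {1..n} \<and> i \<noteq> j}
     \<union> {{Yv i, Yv j} | i j. i \<in> {1..n} \<and> j \<in> {1..n} \<and> i \<noteq> j})"

end

(*
  The key quantity is the number of twin classes meeting a closed neighbourhood N[v]. Two
  vertices are twins iff they lie in the same maximal cliques, N[v] is the union of the maximal
  cliques through v, and every maximal clique is a union of twin classes. Hence this number is at
  most cideg * omega-tilde and bounds omega-tilde and, exponentially, cideg; cdeg bounds and is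
  bounded by these two in the same way, and in the twin reduction the number is the degree plus
  one. Moreover theta* is at most cideg and bounds alpha*.
  An induced obstruction of size n forces alpha(G[N[c]]) >= n (the star) or a maximal clique
  meeting n twin classes (the other four). Conversely, if N[v] meets very many twin classes,
  Ramsey's theorem applied to representatives gives either many independent neighbours of v,
  i.e. a star, or a large clique of pairwise non-twins. Choosing for every pair of the clique a
  vertex outside it that separates the pair and applying Ramsey's theorem to quadruples makes all
  relevant adjacencies depend only on the relative order of the indices; each of the eight
  resulting configurations contains one of the five obstructions.
*)
theory Submission
  imports Defs "HOL-Library.Ramsey"
begin

hide_const (open) Ramsey.clique Ramsey.indep

lemma verts_pair [simp]: "verts (V, E) = V"
  by (simp add: verts_def)

lemma edges_pair [simp]: "edges (V, E) = E"
  by (simp add: edges_def)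

lemma adj_sym: "adj G u v \<longleftrightarrow> adj G v u"
  by (simp add: adj_def insert_commute)

lemma adj_irrefl: "wf_graph G \<Longrightarrow> \<not> adj G v v"
  unfolding wf_graph_def adj_def by fastforce

lemma adj_in_verts: "wf_graph G \<Longrightarrow> adj G u v \<Longrightarrow> u \<in> verts G \<and> v \<in> verts G"
  unfolding wf_graph_def adj_def by blast

lemma verts_induced_subgraph [simp]: "verts (induced_subgraph G S) = S"
  by (simp add: induced_subgraph_def verts_def)

lemma adj_induced_subgraph: "adj (induced_subgraph G S) u v \<longleftrightarrow> adj G u v \<and> u \<in> S \<and> v \<in> S"
  by (auto simp: adj_def induced_subgraph_def edges_def)

lemma wf_induced_subgraph: "wf_graph G \<Longrightarrow> S \<subseteq> verts G \<Longrightarrow> wf_graph (induced_subgraph G S)"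
  unfolding wf_graph_def induced_subgraph_def verts_def edges_def
  by (auto intro: finite_subset)

lemma mem_closed_nbhd: "wf_graph G \<Longrightarrow> u \<in> closed_nbhd G v \<longleftrightarrow> u = v \<or> adj G v u"
  using adj_in_verts by (fastforce simp: closed_nbhd_def)

lemma closed_nbhd_subset_verts: "v \<in> verts G \<Longrightarrow> closed_nbhd G v \<subseteq> verts G"
  by (auto simp: closed_nbhd_def)

lemma finite_closed_nbhd: "wf_graph G \<Longrightarrow> v \<in> verts G \<Longrightarrow> finite (closed_nbhd G v)"
  by (meson closed_nbhd_subset_verts finite_subset wf_graph_def)

section \<open>Maximal cliques and twins\<close>

lemma clique_adj: "clique G K \<Longrightarrow> u \<in> K \<Longrightarrow> v \<in> K \<Longrightarrow> u \<noteq> v \<Longrightarrow> adj G u v"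
  by (simp add: Defs.clique_def)

lemma maximal_clique_subset_verts: "maximal_clique G K \<Longrightarrow> K \<subseteq> verts G"
  by (simp add: maximal_clique_def Defs.clique_def)

lemma finite_maximal_cliques: "wf_graph G \<Longrightarrow> finite {K. maximal_clique G K}"
  by (rule finite_subset[of _ "Pow (verts G)"])
     (auto simp: maximal_clique_def Defs.clique_def wf_graph_def)

lemma finite_maximal_clique: "wf_graph G \<Longrightarrow> maximal_clique G K \<Longrightarrow> finite K"
  by (meson finite_subset maximal_clique_subset_verts wf_graph_def)

lemma finite_max_cliques_at: "wf_graph G \<Longrightarrow> finite (max_cliques_at G v)"
  using finite_maximal_cliques[of G] unfolding max_cliques_at_def by (auto intro: finite_subset)

lemma clique_extends_to_maximal:
  assumes "wf_graph G" and "clique G C"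
  obtains K where "maximal_clique G K" and "C \<subseteq> K"
proof -
  let ?A = "{K. clique G K \<and> C \<subseteq> K}"
  have "finite ?A"
    by (rule finite_subset[of _ "Pow (verts G)"]) (use assms in \<open>auto simp: Defs.clique_def wf_graph_def\<close>)
  moreover have "C \<in> ?A"
    using assms(2) by blast
  ultimately obtain K where "K \<in> ?A" and "\<forall>K'\<in>?A. K \<subseteq> K' \<longrightarrow> K = K'"
    using finite_has_maximal2 by (metis (no_types, lifting))
  then have "maximal_clique G K" and "C \<subseteq> K"
    unfolding maximal_clique_def by auto
  then show ?thesis
    by (rule that)
qed

lemma maximal_clique_subset_closed_nbhd:
  "maximal_clique G K \<Longrightarrow> v \<in> K \<Longrightarrow> K \<subseteq> closed_nbhd G v"
  by (auto simp: maximal_clique_def Defs.clique_def closed_nbhd_def)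

lemma closed_nbhd_eq_Union_max_cliques_at:
  assumes wf: "wf_graph G" and v: "v \<in> verts G"
  shows "closed_nbhd G v = \<Union> (max_cliques_at G v)"
proof (intro equalityI subsetI)
  fix u assume u: "u \<in> closed_nbhd G v"
  have "u = v \<or> adj G v u"
    using u mem_closed_nbhd[OF wf] by blast
  then have "clique G {v, u}"
    using u v closed_nbhd_subset_verts[OF v] adj_sym[of G v u]
    unfolding Defs.clique_def by auto
  then obtain K where "maximal_clique G K" "{v, u} \<subseteq> K"
    using clique_extends_to_maximal[OF wf] by blast
  then show "u \<in> \<Union> (max_cliques_at G v)"
    by (auto simp: max_cliques_at_def)
qed (auto simp: max_cliques_at_def dest: maximal_clique_subset_closed_nbhd)

lemma twin_class_eq_iff:
  "u \<in> verts G \<Longrightarrow> v \<in> verts G \<Longrightarrow>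
    twin_class G u = twin_class G v \<longleftrightarrow> closed_nbhd G u = closed_nbhd G v"
  unfolding twin_class_def by auto

text \<open>A vertex with the same closed neighbourhood as a member of a maximal clique is adjacent
  to all of it, so maximality puts it into the clique.\<close>
lemma maximal_clique_twin_closed:
  assumes wf: "wf_graph G" and K: "maximal_clique G K" and "u \<in> K"
    and "w \<in> verts G" and twins: "closed_nbhd G w = closed_nbhd G u"
  shows "w \<in> K"
proof -
  have "K \<subseteq> closed_nbhd G w"
    using maximal_clique_subset_closed_nbhd[OF K \<open>u \<in> K\<close>] twins by simp
  then have "adj G w k" if "k \<in> K" "k \<noteq> w" for k
    using that mem_closed_nbhd[OF wf] by blast
  then have "clique G (insert w K)"
    using K \<open>w \<in> verts G\<close> unfolding maximal_clique_def Defs.clique_def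
    by (metis adj_sym insert_iff insert_subset)
  then show ?thesis
    using K unfolding maximal_clique_def by blast
qed

lemma maximal_clique_eq_Union_twin_classes:
  assumes "wf_graph G" and "maximal_clique G K"
  shows "\<Union> (twin_class G ` K) = K"
proof (intro equalityI subsetI)
  fix w assume "w \<in> \<Union> (twin_class G ` K)"
  then obtain u where "u \<in> K" "w \<in> verts G" "closed_nbhd G w = closed_nbhd G u"
    by (auto simp: twin_class_def)
  then show "w \<in> K"
    using maximal_clique_twin_closed[OF assms] by blast
next
  fix w assume "w \<in> K"
  then show "w \<in> \<Union> (twin_class G ` K)"
    using maximal_clique_subset_verts[OF assms(2)] by (auto simp: twin_class_def)
qed

lemma max_cliques_at_eq_iff:
  assumes wf: "wf_graph G" and "u \<in> verts G" "v \<in> verts G"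
  shows "max_cliques_at G u = max_cliques_at G v \<longleftrightarrow> closed_nbhd G u = closed_nbhd G v"
proof
  assume "max_cliques_at G u = max_cliques_at G v"
  then show "closed_nbhd G u = closed_nbhd G v"
    using assms by (simp add: closed_nbhd_eq_Union_max_cliques_at)
next
  assume twins: "closed_nbhd G u = closed_nbhd G v"
  have "u \<in> K \<longleftrightarrow> v \<in> K" if "maximal_clique G K" for K
    using maximal_clique_twin_closed[OF wf that _ _ twins] assms(2)
      maximal_clique_twin_closed[OF wf that _ _ twins[symmetric]] assms(3) by blast
  then show "max_cliques_at G u = max_cliques_at G v"
    unfolding max_cliques_at_def by blast
qed

lemma clique_equiv_class_eq_twin_class:
  assumes "wf_graph G" and "v \<in> verts G"
  shows "clique_equiv_class G v = twin_class G v"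
  unfolding clique_equiv_class_def twin_class_def
  using max_cliques_at_eq_iff[OF assms(1) _ assms(2)] by blast

lemma card_image_eq_if_same_fibres:
  assumes "\<And>x y. x \<in> A \<Longrightarrow> y \<in> A \<Longrightarrow> f x = f y \<longleftrightarrow> g x = g y"
  shows "card (f ` A) = card (g ` A)"
proof -
  let ?h = "g \<circ> inv_into A f"
  have h: "?h (f x) = g x" if "x \<in> A" for x
    using assms that f_inv_into_f[of "f x" f A] inv_into_into[of "f x" f A] by force
  have "bij_betw ?h (f ` A) (g ` A)"
    unfolding bij_betw_def inj_on_def using h assms by (auto simp: image_iff)
  then show ?thesis
    by (rule bij_betw_same_card)
qed

lemma card_max_cliques_at_image:
  assumes "wf_graph G" and "K \<subseteq> verts G"
  shows "card (max_cliques_at G ` K) = card (twin_class G ` K)"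
proof (rule card_image_eq_if_same_fibres)
  fix u v assume "u \<in> K" "v \<in> K"
  then have "u \<in> verts G" "v \<in> verts G"
    using assms(2) by auto
  then show "max_cliques_at G u = max_cliques_at G v \<longleftrightarrow> twin_class G u = twin_class G v"
    by (simp add: max_cliques_at_eq_iff[OF assms(1)] twin_class_eq_iff)
qed

lemma Max_insert_0_le:
  fixes f :: "'b \<Rightarrow> nat"
  assumes "\<And>x. P x \<Longrightarrow> f x \<le> k"
  shows "Max (insert 0 {f x | x. P x}) \<le> k"
proof -
  have "finite {f x | x. P x}"
    by (rule finite_subset[of _ "{..k}"]) (use assms in auto)
  then show ?thesis
    using assms by (subst Max_le_iff) auto
qed

lemma le_Max_insert_0:
  fixes f :: "'b \<Rightarrow> nat"
  assumes "finite {x. P x}" and "P x"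
  shows "f x \<le> Max (insert 0 {f x | x. P x})"
proof -
  have "{f x | x. P x} = f ` {x. P x}"
    by auto
  then show ?thesis
    using assms by (intro Max_ge) auto
qed

lemma omega_tilde_eq_Max_twin_classes:
  assumes "wf_graph G"
  shows "omega_tilde G = Max (insert 0 {card (twin_class G ` K) | K. maximal_clique G K})"
proof -
  have "clique_equiv_class G ` K = twin_class G ` K" if "maximal_clique G K" for K
    using that assms maximal_clique_subset_verts clique_equiv_class_eq_twin_class
    by (metis (no_types, lifting) image_cong subsetD)
  then show ?thesis
    unfolding omega_tilde_def by metis
qed

lemma card_twin_classes_le_omega_tilde:
  "wf_graph G \<Longrightarrow> maximal_clique G K \<Longrightarrow> card (twin_class G ` K) \<le> omega_tilde G"
  unfolding omega_tilde_eq_Max_twin_classes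
  by (rule le_Max_insert_0[where f = "\<lambda>K. card (twin_class G ` K)"]) (simp_all add: finite_maximal_cliques)

lemma omega_tilde_le:
  "wf_graph G \<Longrightarrow> (\<And>K. maximal_clique G K \<Longrightarrow> card (twin_class G ` K) \<le> k) \<Longrightarrow> omega_tilde G \<le> k"
  unfolding omega_tilde_eq_Max_twin_classes by (rule Max_insert_0_le)

lemma card_max_cliques_at_le_cideg:
  "wf_graph G \<Longrightarrow> v \<in> verts G \<Longrightarrow> card (max_cliques_at G v) \<le> cideg G"
  unfolding cideg_def
  by (rule le_Max_insert_0[where f = "\<lambda>v. card (max_cliques_at G v)"]) (simp_all add: wf_graph_def)

text \<open>The number of twin classes meeting \<open>N[v]\<close>; it exceeds the degree of the class of \<open>v\<close>
  in the twin reduction by one.\<close>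
definition twin_degree :: "'a graph \<Rightarrow> 'a \<Rightarrow> nat" where
  "twin_degree G v = card (twin_class G ` closed_nbhd G v)"

definition max_twin_degree :: "'a graph \<Rightarrow> nat" where
  "max_twin_degree G = Max (insert 0 {twin_degree G v | v. v \<in> verts G})"

lemma twin_degree_le_max_twin_degree:
  "wf_graph G \<Longrightarrow> v \<in> verts G \<Longrightarrow> twin_degree G v \<le> max_twin_degree G"
  unfolding max_twin_degree_def by (rule le_Max_insert_0) (simp_all add: wf_graph_def)

lemma max_twin_degree_le:
  "(\<And>v. v \<in> verts G \<Longrightarrow> twin_degree G v \<le> k) \<Longrightarrow> max_twin_degree G \<le> k"
  unfolding max_twin_degree_def by (rule Max_insert_0_le)

section \<open>Bounds between the parameters\<close>

lemma twin_degree_le_cideg_mult_omega_tilde: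
  assumes wf: "wf_graph G" and v: "v \<in> verts G"
  shows "twin_degree G v \<le> cideg G * omega_tilde G"
proof -
  have "twin_class G ` closed_nbhd G v = (\<Union>K\<in>max_cliques_at G v. twin_class G ` K)"
    by (simp add: closed_nbhd_eq_Union_max_cliques_at[OF wf v] image_Union)
  then have "twin_degree G v \<le> (\<Sum>K\<in>max_cliques_at G v. card (twin_class G ` K))"
    unfolding twin_degree_def by (simp add: card_UN_le finite_max_cliques_at[OF wf])
  also have "\<dots> \<le> card (max_cliques_at G v) * omega_tilde G"
    using sum_bounded_above[of "max_cliques_at G v" "\<lambda>K. card (twin_class G ` K)" "omega_tilde G"]
      card_twin_classes_le_omega_tilde[OF wf] by (simp add: max_cliques_at_def)
  also have "\<dots> \<le> cideg G * omega_tilde G"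
    by (simp add: card_max_cliques_at_le_cideg[OF wf v])
  finally show ?thesis .
qed

lemma omega_tilde_le_max_twin_degree:
  assumes wf: "wf_graph G"
  shows "omega_tilde G \<le> max_twin_degree G"
proof (rule omega_tilde_le[OF wf])
  fix K assume K: "maximal_clique G K"
  show "card (twin_class G ` K) \<le> max_twin_degree G"
  proof (cases "K = {}")
    case False
    then obtain v where "v \<in> K"
      by blast
    then have "card (twin_class G ` K) \<le> twin_degree G v"
      unfolding twin_degree_def using K maximal_clique_subset_verts[OF K]
      by (intro card_mono image_mono finite_imageI finite_closed_nbhd[OF wf])
         (auto dest: maximal_clique_subset_closed_nbhd)
    also have "\<dots> \<le> max_twin_degree G"
      using \<open>v \<in> K\<close> K maximal_clique_subset_verts twin_degree_le_max_twin_degree[OF wf] by blast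
    finally show ?thesis .
  qed simp
qed

text \<open>A maximal clique is the union of the twin classes it meets, so it is determined by them.\<close>
lemma card_max_cliques_at_le_pow_twin_degree:
  assumes wf: "wf_graph G" and v: "v \<in> verts G"
  shows "card (max_cliques_at G v) \<le> 2 ^ twin_degree G v"
proof -
  have "inj_on (\<lambda>K. twin_class G ` K) (max_cliques_at G v)"
    using maximal_clique_eq_Union_twin_classes[OF wf]
    unfolding max_cliques_at_def by (metis (mono_tags, lifting) inj_onI mem_Collect_eq)
  moreover have "(\<lambda>K. twin_class G ` K) ` max_cliques_at G v \<subseteq> Pow (twin_class G ` closed_nbhd G v)"
    by (auto simp: max_cliques_at_def dest: maximal_clique_subset_closed_nbhd)
  ultimately have "card (max_cliques_at G v) \<le> card (Pow (twin_class G ` closed_nbhd G v))"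
    by (metis card_image card_mono finite_Pow_iff finite_closed_nbhd finite_imageI v wf)
  then show ?thesis
    by (simp add: twin_degree_def card_Pow finite_closed_nbhd[OF wf v])
qed

lemma cideg_le_pow_max_twin_degree:
  assumes wf: "wf_graph G"
  shows "cideg G \<le> 2 ^ max_twin_degree G"
  unfolding cideg_def
proof (rule Max_insert_0_le)
  fix v assume "v \<in> verts G"
  then show "card (max_cliques_at G v) \<le> 2 ^ max_twin_degree G"
    using card_max_cliques_at_le_pow_twin_degree[OF wf] twin_degree_le_max_twin_degree[OF wf]
    by (meson le_trans one_le_numeral power_increasing)
qed

lemma adj_twin_reduction:
  "adj (twin_reduction G) A B \<longleftrightarrow>
    A \<in> twin_class G ` verts G \<and> B \<in> twin_class G ` verts G \<and> A \<noteq> B \<and> (\<exists>a\<in>A. \<exists>b\<in>B. adj G a b)"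
  unfolding adj_def twin_reduction_def by (auto simp: doubleton_eq_iff; metis insert_commute)

lemma twin_reduction_nbrs:
  assumes wf: "wf_graph G" and v: "v \<in> verts G"
  shows "{B \<in> verts (twin_reduction G). adj (twin_reduction G) (twin_class G v) B}
    = twin_class G ` closed_nbhd G v - {twin_class G v}"
proof (intro equalityI subsetI)
  fix B assume "B \<in> {B \<in> verts (twin_reduction G). adj (twin_reduction G) (twin_class G v) B}"
  then obtain w a b where w: "w \<in> verts G" "B = twin_class G w" "B \<noteq> twin_class G v"
      and ab: "a \<in> twin_class G v" "b \<in> twin_class G w" "adj G a b"
    unfolding adj_twin_reduction by blast
  have "b \<in> closed_nbhd G a" "closed_nbhd G a = closed_nbhd G v"
    using ab by (auto simp: twin_class_def closed_nbhd_def)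
  moreover have "twin_class G b = B"
    using ab(2) w(1,2) twin_class_eq_iff[of b G w] by (simp add: twin_class_def)
  ultimately show "B \<in> twin_class G ` closed_nbhd G v - {twin_class G v}"
    using w(3) by auto
next
  fix B assume "B \<in> twin_class G ` closed_nbhd G v - {twin_class G v}"
  then obtain u where u: "u \<in> closed_nbhd G v" "B = twin_class G u" "B \<noteq> twin_class G v"
    by blast
  then have "adj G v u" and "u \<in> verts G"
    using mem_closed_nbhd[OF wf] closed_nbhd_subset_verts[OF v] by auto
  moreover have "v \<in> twin_class G v" "u \<in> twin_class G u"
    using v \<open>u \<in> verts G\<close> by (simp_all add: twin_class_def)
  ultimately show "B \<in> {B \<in> verts (twin_reduction G). adj (twin_reduction G) (twin_class G v) B}"
    using u v unfolding adj_twin_reduction by (auto simp: twin_reduction_def)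
qed

lemma degree_twin_reduction:
  assumes wf: "wf_graph G" and v: "v \<in> verts G"
  shows "card {B \<in> verts (twin_reduction G). adj (twin_reduction G) (twin_class G v) B} + 1
    = twin_degree G v"
proof -
  have "twin_class G v \<in> twin_class G ` closed_nbhd G v"
    by (simp add: closed_nbhd_def)
  moreover have "finite (twin_class G ` closed_nbhd G v)"
    using finite_closed_nbhd[OF assms] by blast
  ultimately show ?thesis
    unfolding twin_reduction_nbrs[OF assms] twin_degree_def
    by (metis Suc_eq_plus1 card_Diff1_less card_Suc_Diff1)
qed

lemma max_degree_twin_reduction_le_max_twin_degree:
  assumes wf: "wf_graph G"
  shows "max_degree (twin_reduction G) \<le> max_twin_degree G"
  unfolding max_degree_def
proof (rule Max_insert_0_le)
  fix A assume "A \<in> verts (twin_reduction G)"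
  then obtain v where "v \<in> verts G" "A = twin_class G v"
    by (auto simp: twin_reduction_def)
  then show "card {B \<in> verts (twin_reduction G). adj (twin_reduction G) A B} \<le> max_twin_degree G"
    using degree_twin_reduction[OF wf] twin_degree_le_max_twin_degree[OF wf] by fastforce
qed

lemma max_twin_degree_le_Suc_max_degree_twin_reduction:
  assumes wf: "wf_graph G"
  shows "max_twin_degree G \<le> max_degree (twin_reduction G) + 1"
proof (rule max_twin_degree_le)
  fix v assume v: "v \<in> verts G"
  let ?R = "twin_reduction G"
  have "finite (verts ?R)"
    using wf by (simp add: twin_reduction_def wf_graph_def)
  moreover have "twin_class G v \<in> verts ?R"
    using v by (simp add: twin_reduction_def)
  ultimately have "card {B \<in> verts ?R. adj ?R (twin_class G v) B} \<le> max_degree ?R"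
    unfolding max_degree_def
    by (intro le_Max_insert_0[where f = "\<lambda>A. card {B \<in> verts ?R. adj ?R A B}"]) simp_all
  then show "twin_degree G v \<le> max_degree ?R + 1"
    using degree_twin_reduction[OF wf v] by simp
qed

definition clique_nbrs :: "'a graph \<Rightarrow> 'a set \<Rightarrow> 'a set set" where
  "clique_nbrs G K = {K'. maximal_clique G K' \<and> K' \<noteq> K \<and> K' \<inter> K \<noteq> {}}"

lemma finite_clique_nbrs: "wf_graph G \<Longrightarrow> finite (clique_nbrs G K)"
  using finite_maximal_cliques by (rule finite_subset[rotated]) (auto simp: clique_nbrs_def)

lemma card_insert_clique_nbrs_le_cdeg:
  assumes wf: "wf_graph G" and K: "maximal_clique G K"
  shows "card (insert K (clique_nbrs G K)) \<le> cdeg G + 1"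
proof -
  have "card (clique_nbrs G K) \<le> cdeg G"
    unfolding cdeg_def clique_nbrs_def
    by (rule le_Max_insert_0[where f = "\<lambda>K. card {K'. maximal_clique G K' \<and> K' \<noteq> K \<and> K' \<inter> K \<noteq> {}}"])
       (simp_all add: K finite_maximal_cliques[OF wf])
  then show ?thesis
    using finite_clique_nbrs[OF wf] by (simp add: card_insert_if)
qed

lemma max_cliques_at_subset_clique_nbrs:
  "maximal_clique G K \<Longrightarrow> u \<in> K \<Longrightarrow> max_cliques_at G u \<subseteq> insert K (clique_nbrs G K)"
  by (auto simp: max_cliques_at_def clique_nbrs_def)

lemma cideg_le_Suc_cdeg:
  assumes wf: "wf_graph G"
  shows "cideg G \<le> cdeg G + 1"
  unfolding cideg_def
proof (rule Max_insert_0_le)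
  fix v assume "v \<in> verts G"
  then have "clique G {v}"
    by (simp add: Defs.clique_def)
  then obtain K where K: "maximal_clique G K" "v \<in> K"
    using clique_extends_to_maximal[OF wf] by blast
  have "card (max_cliques_at G v) \<le> card (insert K (clique_nbrs G K))"
    using max_cliques_at_subset_clique_nbrs[OF K] finite_clique_nbrs[OF wf] by (intro card_mono) auto
  also have "\<dots> \<le> cdeg G + 1"
    by (rule card_insert_clique_nbrs_le_cdeg[OF wf K(1)])
  finally show "card (max_cliques_at G v) \<le> cdeg G + 1" .
qed

text \<open>The twin class of \<open>u \<in> K\<close> is determined by the set of maximal cliques through \<open>u\<close>,
  which consists of \<open>K\<close> and some of its neighbours in the clique graph.\<close>
lemma omega_tilde_le_pow_Suc_cdeg:
  assumes wf: "wf_graph G"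
  shows "omega_tilde G \<le> 2 ^ (cdeg G + 1)"
proof (rule omega_tilde_le[OF wf])
  fix K assume K: "maximal_clique G K"
  let ?N = "insert K (clique_nbrs G K)"
  have "finite ?N"
    using finite_clique_nbrs[OF wf] by simp
  have "card (twin_class G ` K) = card (max_cliques_at G ` K)"
    using card_max_cliques_at_image[OF wf maximal_clique_subset_verts[OF K]] by simp
  also have "\<dots> \<le> card (Pow ?N)"
    using max_cliques_at_subset_clique_nbrs[OF K] \<open>finite ?N\<close> by (intro card_mono) auto
  also have "\<dots> = 2 ^ card ?N"
    using \<open>finite ?N\<close> by (rule card_Pow)
  also have "\<dots> \<le> 2 ^ (cdeg G + 1)"
    using card_insert_clique_nbrs_le_cdeg[OF wf K] by (rule power_increasing) simp
  finally show "card (twin_class G ` K) \<le> 2 ^ (cdeg G + 1)" .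
qed

lemma cdeg_le_cideg_mult_omega_tilde:
  assumes wf: "wf_graph G"
  shows "cdeg G \<le> cideg G * omega_tilde G"
  unfolding cdeg_def
proof (rule Max_insert_0_le)
  fix K assume K: "maximal_clique G K"
  have KV: "K \<subseteq> verts G" and "finite K"
    using maximal_clique_subset_verts[OF K] finite_maximal_clique[OF wf K] by auto
  have "{K'. maximal_clique G K' \<and> K' \<noteq> K \<and> K' \<inter> K \<noteq> {}} \<subseteq> \<Union> (max_cliques_at G ` K)"
    by (auto simp: max_cliques_at_def)
  moreover have "finite (\<Union> (max_cliques_at G ` K))"
    using \<open>finite K\<close> finite_max_cliques_at[OF wf] by blast
  ultimately have "card {K'. maximal_clique G K' \<and> K' \<noteq> K \<and> K' \<inter> K \<noteq> {}}
      \<le> card (\<Union> (max_cliques_at G ` K))"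
    by (rule card_mono[rotated])
  also have "\<dots> \<le> (\<Sum>M\<in>max_cliques_at G ` K. card M)"
    by (rule card_Union_le_sum_card)
  also have "\<dots> \<le> card (max_cliques_at G ` K) * cideg G"
    using sum_bounded_above[of "max_cliques_at G ` K" card "cideg G"]
      card_max_cliques_at_le_cideg[OF wf] KV by auto
  also have "\<dots> \<le> omega_tilde G * cideg G"
    using card_max_cliques_at_image[OF wf KV] card_twin_classes_le_omega_tilde[OF wf K] by simp
  finally show "card {K'. maximal_clique G K' \<and> K' \<noteq> K \<and> K' \<inter> K \<noteq> {}} \<le> cideg G * omega_tilde G"
    by (simp add: mult.commute)
qed

lemma clique_cover_number_le:
  "finite \<K> \<Longrightarrow> \<forall>K\<in>\<K>. clique H K \<Longrightarrow> \<Union>\<K> = verts H \<Longrightarrow> clique_cover_number H \<le> card \<K>"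
  unfolding clique_cover_number_def by (rule Least_le) blast

lemma theta_star_le_cideg:
  assumes wf: "wf_graph G"
  shows "theta_star G \<le> cideg G"
  unfolding theta_star_def
proof (rule Max_insert_0_le)
  fix v assume v: "v \<in> verts G"
  let ?H = "induced_subgraph G (closed_nbhd G v)"
  have "clique ?H K" if "K \<in> max_cliques_at G v" for K
    using that maximal_clique_subset_closed_nbhd[of G K v]
    unfolding max_cliques_at_def maximal_clique_def
    by (auto simp: Defs.clique_def adj_induced_subgraph)
  then have "clique_cover_number ?H \<le> card (max_cliques_at G v)"
    by (intro clique_cover_number_le)
       (simp_all add: finite_max_cliques_at[OF wf] closed_nbhd_eq_Union_max_cliques_at[OF wf v])
  also have "\<dots> \<le> cideg G"
    by (rule card_max_cliques_at_le_cideg[OF wf v])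
  finally show "clique_cover_number ?H \<le> cideg G" .
qed

text \<open>An independent set meets every clique of a cover at most once.\<close>
lemma independence_number_le_clique_cover_number:
  assumes wf: "wf_graph H"
  shows "independence_number H \<le> clique_cover_number H"
proof -
  have "\<exists>k \<K>. finite \<K> \<and> card \<K> = k \<and> (\<forall>K\<in>\<K>. clique H K) \<and> \<Union>\<K> = verts H"
    using wf by (intro exI[of _ "card ((\<lambda>v. {v}) ` verts H)"] exI[of _ "(\<lambda>v. {v}) ` verts H"])
      (auto simp: wf_graph_def Defs.clique_def)
  from LeastI_ex[OF this] obtain \<K> where \<K>: "finite \<K>" "card \<K> = clique_cover_number H"
      "\<forall>K\<in>\<K>. clique H K" "\<Union>\<K> = verts H"
    unfolding clique_cover_number_def by blast
  show ?thesis
    unfolding independence_number_def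
  proof (rule Max_insert_0_le)
    fix I assume I: "independent H I"
    have "card I \<le> card \<K>"
    proof (rule card_le_if_inj_on_rel[where r = "(\<in>)"])
      show "\<exists>K. K \<in> \<K> \<and> u \<in> K" if "u \<in> I" for u
        using that I \<K>(4) by (auto simp: independent_def)
      show "u = u'" if "u \<in> I" "u' \<in> I" "K \<in> \<K>" "u \<in> K" "u' \<in> K" for u u' K
        using that I \<K>(3) clique_adj by (fastforce simp: independent_def)
    qed (rule \<K>(1))
    then show "card I \<le> clique_cover_number H"
      using \<K>(2) by simp
  qed
qed

lemma alpha_star_le_theta_star:
  assumes wf: "wf_graph G"
  shows "alpha_star G \<le> theta_star G"
  unfolding alpha_star_def
proof (rule Max_insert_0_le)
  fix v assume v: "v \<in> verts G"
  let ?H = "induced_subgraph G (closed_nbhd G v)"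
  have "independence_number ?H \<le> clique_cover_number ?H"
    using wf_induced_subgraph[OF wf closed_nbhd_subset_verts[OF v]]
    by (rule independence_number_le_clique_cover_number)
  also have "\<dots> \<le> theta_star G"
    unfolding theta_star_def
    by (rule le_Max_insert_0[where f = "\<lambda>v. clique_cover_number (induced_subgraph G (closed_nbhd G v))"])
       (simp_all add: v wf[unfolded wf_graph_def])
  finally show "independence_number ?H \<le> theta_star G" .
qed

section \<open>The obstructions\<close>

definition contains_obstruction :: "'a graph \<Rightarrow> nat \<Rightarrow> bool" where
  "contains_obstruction G n \<longleftrightarrow>
    contains_induced G (star_graph n) \<or> contains_induced G (matching_KI n) \<or>
    contains_induced G (matching_KK n) \<or> contains_induced G (antimatching_KK n) \<or>
    contains_induced G (halfgraph_KK n)"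

lemma verts_star_graph: "verts (star_graph n) = insert Cv (Xv ` {1..n})"
  by (simp add: star_graph_def)

lemma adj_star_graph:
  "adj (star_graph n) Cv (Xv i) \<longleftrightarrow> i \<in> {1..n}"
  "adj (star_graph n) (Xv i) Cv \<longleftrightarrow> i \<in> {1..n}"
  "\<not> adj (star_graph n) Cv Cv"
  "\<not> adj (star_graph n) (Xv i) (Xv j)"
  by (auto simp: adj_def star_graph_def doubleton_eq_iff)

lemma verts_XY_patterns:
  "verts (matching_KI n) = XY n" "verts (matching_KK n) = XY n"
  "verts (antimatching_KK n) = XY n" "verts (halfgraph_KK n) = XY n"
  by (simp_all add: matching_KI_def matching_KK_def antimatching_KK_def halfgraph_KK_def)

context
  fixes i j n :: nat
  assumes ij: "i \<in> {1..n}" "j \<in> {1..n}"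
begin

lemma adj_matching_KI:
  "adj (matching_KI n) (Xv i) (Xv j) \<longleftrightarrow> i \<noteq> j"
  "adj (matching_KI n) (Xv i) (Yv j) \<longleftrightarrow> i = j"
  "\<not> adj (matching_KI n) (Yv i) (Yv j)"
  using ij by (auto simp: adj_def matching_KI_def doubleton_eq_iff)

lemma adj_matching_KK:
  "adj (matching_KK n) (Xv i) (Xv j) \<longleftrightarrow> i \<noteq> j"
  "adj (matching_KK n) (Xv i) (Yv j) \<longleftrightarrow> i = j"
  "adj (matching_KK n) (Yv i) (Yv j) \<longleftrightarrow> i \<noteq> j"
  using ij by (auto simp: adj_def matching_KK_def doubleton_eq_iff)

lemma adj_antimatching_KK:
  "adj (antimatching_KK n) (Xv i) (Xv j) \<longleftrightarrow> i \<noteq> j"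
  "adj (antimatching_KK n) (Xv i) (Yv j) \<longleftrightarrow> i \<noteq> j"
  "adj (antimatching_KK n) (Yv i) (Yv j) \<longleftrightarrow> i \<noteq> j"
  using ij by (auto simp: adj_def antimatching_KK_def doubleton_eq_iff)

lemma adj_halfgraph_KK:
  "adj (halfgraph_KK n) (Xv i) (Xv j) \<longleftrightarrow> i \<noteq> j"
  "adj (halfgraph_KK n) (Xv i) (Yv j) \<longleftrightarrow> i \<le> j"
  "adj (halfgraph_KK n) (Yv i) (Yv j) \<longleftrightarrow> i \<noteq> j"
  using ij by (auto simp: adj_def halfgraph_KK_def doubleton_eq_iff)

end

lemma card_le_omega_tilde_if_nontwin_clique:
  assumes wf: "wf_graph G" and X: "clique G X" and nontwin: "inj_on (closed_nbhd G) X"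
  shows "card X \<le> omega_tilde G"
proof -
  obtain K where K: "maximal_clique G K" "X \<subseteq> K"
    using clique_extends_to_maximal[OF wf X] by blast
  have "inj_on (twin_class G) X"
    using nontwin X twin_class_eq_iff unfolding inj_on_def Defs.clique_def by (metis subsetD)
  then have "card X = card (twin_class G ` X)"
    by (simp add: card_image)
  also have "\<dots> \<le> card (twin_class G ` K)"
    using K finite_maximal_clique[OF wf K(1)] by (intro card_mono) auto
  also have "\<dots> \<le> omega_tilde G"
    by (rule card_twin_classes_le_omega_tilde[OF wf K(1)])
  finally show ?thesis .
qed

text \<open>In the four two-sided patterns the side \<open>X\<close> is a clique whose vertices are told apart by
  the side \<open>Y\<close>, so an induced copy yields a maximal clique meeting \<open>n\<close> twin classes.\<close>
lemma XY_pattern_le_omega_tilde: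
  assumes wf: "wf_graph G" and "contains_induced G P" and P: "verts P = XY n"
    and sep: "\<And>i j. i \<in> {1..n} \<Longrightarrow> j \<in> {1..n} \<Longrightarrow> i \<noteq> j \<Longrightarrow>
      adj P (Xv i) (Xv j) \<and> (\<exists>k\<in>{1..n}. adj P (Xv i) (Yv k) \<noteq> adj P (Xv j) (Yv k))"
  shows "n \<le> omega_tilde G"
proof -
  obtain f where f: "inj_on f (XY n)" "f ` XY n \<subseteq> verts G"
      "\<forall>a\<in>XY n. \<forall>b\<in>XY n. adj G (f a) (f b) \<longleftrightarrow> adj P a b"
    using assms(2) unfolding contains_induced_def P by blast
  let ?X = "f ` Xv ` {1..n}"
  have in_XY: "Xv i \<in> XY n" "Yv i \<in> XY n" if "i \<in> {1..n}" for i
    using that by (auto simp: XY_def)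
  have X_XY: "Xv ` {1..n} \<subseteq> XY n"
    by (auto simp: XY_def)
  have "clique G ?X"
    unfolding Defs.clique_def
  proof (intro conjI ballI impI)
    show "?X \<subseteq> verts G"
      using f(2) X_XY by blast
    fix a b assume "a \<in> ?X" "b \<in> ?X" "a \<noteq> b"
    then obtain i j where "i \<in> {1..n}" "j \<in> {1..n}" "i \<noteq> j" "a = f (Xv i)" "b = f (Xv j)"
      by blast
    then show "adj G a b"
      using f(3) sep in_XY by simp
  qed
  moreover have "inj_on (closed_nbhd G) ?X"
  proof (rule inj_onI, rule ccontr)
    fix a b assume "a \<in> ?X" "b \<in> ?X" "closed_nbhd G a = closed_nbhd G b" "a \<noteq> b"
    then obtain i j where ij: "i \<in> {1..n}" "j \<in> {1..n}" "i \<noteq> j" "a = f (Xv i)" "b = f (Xv j)"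
      by blast
    then obtain k where k: "k \<in> {1..n}" "adj P (Xv i) (Yv k) \<noteq> adj P (Xv j) (Yv k)"
      using sep by blast
    have "f (Yv k) \<noteq> a" "f (Yv k) \<noteq> b"
      using inj_onD[OF f(1)] in_XY ij k(1) by blast+
    then have "f (Yv k) \<in> closed_nbhd G a \<longleftrightarrow> adj P (Xv i) (Yv k)"
        "f (Yv k) \<in> closed_nbhd G b \<longleftrightarrow> adj P (Xv j) (Yv k)"
      using ij k(1) f(3) in_XY by (simp_all add: mem_closed_nbhd[OF wf])
    then show False
      using k(2) \<open>closed_nbhd G a = closed_nbhd G b\<close> by simp
  qed
  moreover have "card ?X = n"
    using card_image[OF inj_on_subset[OF f(1) X_XY]] card_image[of Xv "{1..n}"] by (simp add: inj_on_def)
  ultimately show ?thesis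
    using card_le_omega_tilde_if_nontwin_clique[OF wf] by metis
qed

lemma star_graph_le_alpha_star:
  assumes wf: "wf_graph G" and "contains_induced G (star_graph n)"
  shows "n \<le> alpha_star G"
proof -
  obtain f where f: "inj_on f (verts (star_graph n))" "f ` verts (star_graph n) \<subseteq> verts G"
      "\<forall>a\<in>verts (star_graph n). \<forall>b\<in>verts (star_graph n).
        adj G (f a) (f b) \<longleftrightarrow> adj (star_graph n) a b"
    using assms(2) unfolding contains_induced_def by blast
  let ?c = "f Cv" and ?L = "f ` Xv ` {1..n}"
  let ?H = "induced_subgraph G (closed_nbhd G ?c)"
  have c: "?c \<in> verts G"
    using f(2) by (auto simp: verts_star_graph)
  have "finite {I. independent ?H I}"
    using finite_closed_nbhd[OF wf c] by (auto simp: independent_def intro: finite_subset[of _ "Pow _"])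
  moreover have "?L \<subseteq> closed_nbhd G ?c"
    using f(3) by (auto simp: verts_star_graph adj_star_graph mem_closed_nbhd[OF wf])
  then have "independent ?H ?L"
    using f(3) by (auto simp: independent_def verts_star_graph adj_star_graph adj_induced_subgraph)
  ultimately have "card ?L \<le> independence_number ?H"
    unfolding independence_number_def by (rule le_Max_insert_0[where f = card])
  also have "\<dots> \<le> alpha_star G"
    unfolding alpha_star_def
    by (rule le_Max_insert_0[where f = "\<lambda>v. independence_number (induced_subgraph G (closed_nbhd G v))"])
       (simp_all add: c wf[unfolded wf_graph_def])
  finally show ?thesis
    using inj_on_subset[OF f(1)] by (subst (asm) card_image) (auto simp: verts_star_graph card_image inj_on_def)
qed

lemma obstruction_le_alpha_star_or_omega_tilde:
  assumes wf: "wf_graph G" and "contains_obstruction G n"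
  shows "n \<le> alpha_star G \<or> n \<le> omega_tilde G"
  using assms(2) unfolding contains_obstruction_def
proof (elim disjE)
  assume "contains_induced G (star_graph n)"
  then show ?thesis
    using star_graph_le_alpha_star[OF wf] by blast
next
  assume "contains_induced G (matching_KI n)"
  then show ?thesis
    by (intro disjI2 XY_pattern_le_omega_tilde[OF wf _ verts_XY_patterns(1)])
       (auto simp: adj_matching_KI intro: bexI)
next
  assume "contains_induced G (matching_KK n)"
  then show ?thesis
    by (intro disjI2 XY_pattern_le_omega_tilde[OF wf _ verts_XY_patterns(2)])
       (auto simp: adj_matching_KK intro: bexI)
next
  assume "contains_induced G (antimatching_KK n)"
  then show ?thesis
    by (intro disjI2 XY_pattern_le_omega_tilde[OF wf _ verts_XY_patterns(3)])
       (auto simp: adj_antimatching_KK intro: bexI)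
next
  assume "contains_induced G (halfgraph_KK n)"
  moreover have "\<exists>k\<in>{1..n}. adj (halfgraph_KK n) (Xv i) (Yv k) \<noteq> adj (halfgraph_KK n) (Xv j) (Yv k)"
    if "i \<in> {1..n}" "j \<in> {1..n}" "i \<noteq> j" for i j
    using that by (intro bexI[of _ "min i j"]) (auto simp: adj_halfgraph_KK min_def)
  ultimately show ?thesis
    by (intro disjI2 XY_pattern_le_omega_tilde[OF wf _ verts_XY_patterns(4)])
       (auto simp: adj_halfgraph_KK)
qed

lemma contains_star_graph:
  assumes wf: "wf_graph G" and c: "c \<in> verts G" and L: "independent G L" "c \<notin> L" "finite L"
    and adj: "\<forall>l\<in>L. adj G c l" and n: "n \<le> card L"
  shows "contains_induced G (star_graph n)"
proof -
  obtain L' where "L' \<subseteq> L" "card L' = n"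
    using obtain_subset_with_card_n[OF n] by blast
  then obtain l where l: "bij_betw l {1..n} L'"
    using ex_bij_betw_nat_finite_1[OF finite_subset[OF _ L(3)]] by blast
  then have l_L: "l i \<in> L" if "i \<in> {1..n}" for i
    using that \<open>L' \<subseteq> L\<close> bij_betwE by blast
  have l_inj: "inj_on l {1..n}"
    using l by (rule bij_betw_imp_inj_on)
  let ?f = "\<lambda>p. case p of Xv i \<Rightarrow> l i | _ \<Rightarrow> c"
  show ?thesis
    unfolding contains_induced_def
  proof (intro exI[of _ ?f] conjI ballI)
    show "inj_on ?f (verts (star_graph n))"
      using l_L l_inj L(2) unfolding verts_star_graph inj_on_def by fastforce
    show "?f ` verts (star_graph n) \<subseteq> verts G"
      using l_L L(1) c by (auto simp: verts_star_graph independent_def)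
    have "adj G c (l i)" "adj G (l i) c" if "i \<in> {1..n}" for i
      using adj l_L[OF that] adj_sym[of G c "l i"] by auto
    moreover have "\<not> adj G (l i) (l j)" if "i \<in> {1..n}" "j \<in> {1..n}" for i j
      using L(1) l_L[OF that(1)] l_L[OF that(2)] by (auto simp: independent_def)
    moreover fix a b assume "a \<in> verts (star_graph n)" "b \<in> verts (star_graph n)"
    ultimately show "adj G (?f a) (?f b) \<longleftrightarrow> adj (star_graph n) a b"
      using adj_irrefl[OF wf, of c] by (auto simp: verts_star_graph adj_star_graph)
  qed
qed

lemma contains_XY_pattern:
  assumes P: "verts P = XY n"
    and V: "x ` {1..n} \<subseteq> verts G" "y ` {1..n} \<subseteq> verts G"
    and inj: "inj_on x {1..n}" "inj_on y {1..n}"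
    and disj: "\<And>i j. i \<in> {1..n} \<Longrightarrow> j \<in> {1..n} \<Longrightarrow> x i \<noteq> y j"
    and adj: "\<And>i j. i \<in> {1..n} \<Longrightarrow> j \<in> {1..n} \<Longrightarrow>
      (adj G (x i) (x j) \<longleftrightarrow> adj P (Xv i) (Xv j)) \<and> (adj G (x i) (y j) \<longleftrightarrow> adj P (Xv i) (Yv j)) \<and>
      (adj G (y i) (y j) \<longleftrightarrow> adj P (Yv i) (Yv j))"
  shows "contains_induced G P"
proof -
  let ?f = "\<lambda>p. case p of Xv i \<Rightarrow> x i | Yv i \<Rightarrow> y i | Cv \<Rightarrow> x 1"
  show ?thesis
    unfolding contains_induced_def P
  proof (intro exI[of _ ?f] conjI ballI)
    show "inj_on ?f (XY n)"
    proof (rule inj_onI)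
      fix a b assume "a \<in> XY n" "b \<in> XY n" "?f a = ?f b"
      then show "a = b"
        using disj unfolding XY_def
        by (auto simp: inj_on_eq_iff[OF inj(1)] inj_on_eq_iff[OF inj(2)]) (metis atLeastAtMost_iff)
    qed
    show "?f ` XY n \<subseteq> verts G"
      using V by (auto simp: XY_def)
    have "adj G (y i) (x j) \<longleftrightarrow> adj P (Yv i) (Xv j)" if "i \<in> {1..n}" "j \<in> {1..n}" for i j
      using adj[OF that(2,1)] adj_sym[of G "y i"] adj_sym[of P "Yv i"] by simp
    moreover fix a b assume "a \<in> XY n" "b \<in> XY n"
    ultimately show "adj G (?f a) (?f b) \<longleftrightarrow> adj P a b"
      using adj unfolding XY_def by (auto simp del: atLeastAtMost_iff)
  qed
qed

text \<open>The diagonal value \<open>d\<close> can be chosen, and is chosen so that every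
  combination of \<open>p\<close>, \<open>q\<close> and \<open>s\<close> yields an obstruction.\<close>
locale homogeneous_sequences =
  fixes G :: "'a graph" and n :: nat and x y :: "nat \<Rightarrow> 'a" and d p q s :: bool
  assumes wf: "wf_graph G"
    and x_verts: "x ` {1..n+1} \<subseteq> verts G" and y_verts: "y ` {1..n+1} \<subseteq> verts G"
    and x_inj: "inj_on x {1..n+1}"
    and x_ne_y: "\<And>i j. i \<in> {1..n+1} \<Longrightarrow> j \<in> {1..n+1} \<Longrightarrow> x i \<noteq> y j"
    and adj_xx: "\<And>i j. i \<in> {1..n+1} \<Longrightarrow> j \<in> {1..n+1} \<Longrightarrow> i \<noteq> j \<Longrightarrow> adj G (x i) (x j)"
    and adj_yy: "\<And>i j. i \<in> {1..n+1} \<Longrightarrow> j \<in> {1..n+1} \<Longrightarrow> i < j \<Longrightarrow> adj G (y i) (y j) \<longleftrightarrow> s"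
    and adj_xy: "\<And>i j. i \<in> {1..n+1} \<Longrightarrow> j \<in> {1..n+1} \<Longrightarrow>
      adj G (x i) (y j) \<longleftrightarrow> (if i = j then d else if j < i then p else q)"
    and diagonal: "d \<longleftrightarrow> (p = q \<longrightarrow> \<not> p)"
begin

lemma adj_xx_iff: "i \<in> {1..n+1} \<Longrightarrow> j \<in> {1..n+1} \<Longrightarrow> adj G (x i) (x j) \<longleftrightarrow> i \<noteq> j"
  using adj_xx adj_irrefl[OF wf] by blast

lemma adj_yy_iff: "i \<in> {1..n+1} \<Longrightarrow> j \<in> {1..n+1} \<Longrightarrow> adj G (y i) (y j) \<longleftrightarrow> i \<noteq> j \<and> s"
  using adj_yy adj_yy[of j i] adj_irrefl[OF wf] adj_sym[of G "y i" "y j"] by (cases i j rule: linorder_cases) auto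

text \<open>If \<open>y i = y j\<close> with \<open>i < j\<close>, then comparing \<open>x i\<close> and \<open>x j\<close> with it gives \<open>d = q\<close> and
  \<open>d = p\<close>, which the choice of \<open>d\<close> excludes.\<close>
lemma y_inj: "inj_on y {1..n+1}"
proof -
  have "y i \<noteq> y j" if "i \<in> {1..n+1}" "j \<in> {1..n+1}" "i < j" for i j
    using adj_xy[of i i] adj_xy[of i j] adj_xy[of j j] adj_xy[of j i] that diagonal by auto
  then show ?thesis
    by (metis inj_onI linorder_neqE_nat)
qed

lemma contains_XY:
  assumes "verts P = XY n"
    and "\<And>i j. i \<in> {1..n} \<Longrightarrow> j \<in> {1..n} \<Longrightarrow>
      (adj P (Xv i) (Xv j) \<longleftrightarrow> i \<noteq> j) \<and>
      (adj P (Xv i) (Yv j) \<longleftrightarrow> (if i = j then d else if j < i then p else q)) \<and>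
      (adj P (Yv i) (Yv j) \<longleftrightarrow> i \<noteq> j \<and> s)"
  shows "contains_induced G P"
proof -
  have sub: "{1..n} \<subseteq> {1..n+1}"
    by auto
  show ?thesis
  proof (rule contains_XY_pattern[OF assms(1) _ _ inj_on_subset[OF x_inj sub] inj_on_subset[OF y_inj sub]])
    show "x ` {1..n} \<subseteq> verts G" "y ` {1..n} \<subseteq> verts G"
      using sub x_verts y_verts by blast+
    fix i j assume ij: "i \<in> {1..n}" "j \<in> {1..n}"
    then have "i \<in> {1..n+1}" "j \<in> {1..n+1}"
      using sub by blast+
    then show "x i \<noteq> y j"
      and "(adj G (x i) (x j) \<longleftrightarrow> adj P (Xv i) (Xv j)) \<and> (adj G (x i) (y j) \<longleftrightarrow> adj P (Xv i) (Yv j)) \<and>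
        (adj G (y i) (y j) \<longleftrightarrow> adj P (Yv i) (Yv j))"
      using x_ne_y assms(2)[OF ij] adj_xx_iff adj_yy_iff adj_xy by simp_all
  qed
qed

lemma contains_star:
  assumes "\<not> s" and c: "c \<in> {1..n+1}" and J: "J \<subseteq> {1..n+1}" "card J = n"
    and adj: "\<And>j. j \<in> J \<Longrightarrow> adj G (x c) (y j)"
  shows "contains_induced G (star_graph n)"
proof (rule contains_star_graph[OF wf, where c = "x c" and L = "y ` J"])
  show "x c \<in> verts G"
    using c x_verts by blast
  show "independent G (y ` J)"
    unfolding independent_def
  proof (intro conjI ballI)
    show "y ` J \<subseteq> verts G"
      using J(1) y_verts by blast
    fix a b assume "a \<in> y ` J" "b \<in> y ` J"
    then show "\<not> adj G a b"
      using J(1) adj_yy_iff \<open>\<not> s\<close> by blast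
  qed
  show "x c \<notin> y ` J"
    using c J x_ne_y by blast
  show "\<forall>l\<in>y ` J. adj G (x c) l"
    using adj by blast
  show "finite (y ` J)" "n \<le> card (y ` J)"
    using J card_image[OF inj_on_subset[OF y_inj J(1)]] by (auto intro: finite_subset)
qed

lemma contains_obstruction_if_independent:
  assumes "\<not> s"
  shows "contains_obstruction G n"
proof -
  consider q | p | "\<not> p" "\<not> q"
    by blast
  then show ?thesis
  proof cases
    case 1
    then have "contains_induced G (star_graph n)"
      using adj_xy[of 1] by (intro contains_star[OF assms, of 1 "{2..n+1}"]) auto
    then show ?thesis
      by (simp add: contains_obstruction_def)
  next
    case 2
    then have "contains_induced G (star_graph n)"
      using adj_xy[of "n+1"] by (intro contains_star[OF assms, of "n+1" "{1..n}"]) auto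
    then show ?thesis
      by (simp add: contains_obstruction_def)
  next
    case 3
    then have "contains_induced G (matching_KI n)"
      using diagonal assms by (intro contains_XY) (auto simp: verts_XY_patterns adj_matching_KI)
    then show ?thesis
      by (simp add: contains_obstruction_def)
  qed
qed

text \<open>Here \<open>x i\<close> is adjacent to \<open>y j\<close> iff \<open>j \<le> i\<close>, so \<open>y\<close> plays the side \<open>X\<close> of the half-graph.\<close>
lemma contains_halfgraph_reversed:
  assumes s p "\<not> q"
  shows "contains_induced G (halfgraph_KK n)"
proof -
  have sub: "{1..n} \<subseteq> {1..n+1}"
    by auto
  show ?thesis
  proof (rule contains_XY_pattern[OF verts_XY_patterns(4) _ _
        inj_on_subset[OF y_inj sub] inj_on_subset[OF x_inj sub]])
    show "y ` {1..n} \<subseteq> verts G" "x ` {1..n} \<subseteq> verts G"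
      using sub x_verts y_verts by blast+
    fix i j assume ij: "i \<in> {1..n}" "j \<in> {1..n}"
    then have "i \<in> {1..n+1}" "j \<in> {1..n+1}"
      using sub by blast+
    then show "y i \<noteq> x j"
      and "(adj G (y i) (y j) \<longleftrightarrow> adj (halfgraph_KK n) (Xv i) (Xv j)) \<and>
        (adj G (y i) (x j) \<longleftrightarrow> adj (halfgraph_KK n) (Xv i) (Yv j)) \<and>
        (adj G (x i) (x j) \<longleftrightarrow> adj (halfgraph_KK n) (Yv i) (Yv j))"
      using x_ne_y[of j i] adj_xy[of j i] adj_sym[of G "y i" "x j"] adj_xx_iff adj_yy_iff
        adj_halfgraph_KK[OF ij] diagonal assms by auto
  qed
qed

lemma contains_obstruction_if_clique:
  assumes s
  shows "contains_obstruction G n"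
proof -
  consider "p" "q" | "\<not> p" "q" | "\<not> p" "\<not> q" | "p" "\<not> q"
    by blast
  then show ?thesis
  proof cases
    case 1
    then have "contains_induced G (antimatching_KK n)"
      using diagonal assms by (intro contains_XY) (auto simp: verts_XY_patterns adj_antimatching_KK)
    then show ?thesis
      by (simp add: contains_obstruction_def)
  next
    case 2
    then have "contains_induced G (halfgraph_KK n)"
      using diagonal assms by (intro contains_XY) (auto simp: verts_XY_patterns adj_halfgraph_KK)
    then show ?thesis
      by (simp add: contains_obstruction_def)
  next
    case 3
    then have "contains_induced G (matching_KK n)"
      using diagonal assms by (intro contains_XY) (auto simp: verts_XY_patterns adj_matching_KK)
    then show ?thesis
      by (simp add: contains_obstruction_def)
  next
    case 4
    then show ?thesis
      using contains_halfgraph_reversed assms by (simp add: contains_obstruction_def)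
  qed
qed

lemma contains_obstruction: "contains_obstruction G n"
  using contains_obstruction_if_clique contains_obstruction_if_independent by blast

end

section \<open>Ramsey arguments\<close>

lemma ordered_ramsey:
  fixes \<chi> :: "nat list \<Rightarrow> 'c::finite"
  assumes "partn_lst {..<M} (replicate (card (UNIV :: 'c set)) L) r"
  obtains h c where "strict_mono_on {..<L} h" "h ` {..<L} \<subseteq> {..<M}"
    "\<And>zs. strict_sorted zs \<Longrightarrow> length zs = r \<Longrightarrow> set zs \<subseteq> {..<L} \<Longrightarrow> \<chi> (map h zs) = c"
proof -
  obtain \<phi> :: "'c \<Rightarrow> nat" where \<phi>: "bij_betw \<phi> UNIV {..<card (UNIV :: 'c set)}"
    using ex_bij_betw_finite_nat[of "UNIV :: 'c set"] by (auto simp: atLeast0LessThan)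
  define f where "f T = \<phi> (\<chi> (sorted_list_of_set T))" for T
  have "f \<in> nsets {..<M} r \<rightarrow> {..<card (UNIV :: 'c set)}"
    using \<phi> by (auto simp: f_def bij_betw_def)
  then obtain i H where H: "H \<in> nsets {..<M} L" and hom: "f ` nsets H r \<subseteq> {i}"
    using partn_lstE[OF assms] by (metis length_replicate nth_replicate)
  define h where "h = (!) (sorted_list_of_set H)"
  have len: "length (sorted_list_of_set H) = L" and "finite H"
    using H by (auto simp: nsets_def)
  have mono: "strict_mono_on {..<L} h"
    unfolding h_def using len sorted_wrt_nth_less[OF strict_sorted_list_of_set]
    by (intro strict_mono_onI) auto
  have range: "h ` {..<L} \<subseteq> H"
    unfolding h_def using len nth_mem[of _ "sorted_list_of_set H"] \<open>finite H\<close> by auto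
  show ?thesis
  proof (rule that[OF mono, of "inv \<phi> i"])
    show "h ` {..<L} \<subseteq> {..<M}"
      using range H by (auto simp: nsets_def)
    fix zs :: "nat list" assume zs: "strict_sorted zs" "length zs = r" "set zs \<subseteq> {..<L}"
    then have "strict_sorted (map h zs)"
      using mono by (auto simp: sorted_wrt_map intro: sorted_wrt_mono_rel[OF _ zs(1)] dest: strict_mono_onD)
    then have "sorted_list_of_set (set (map h zs)) = map h zs"
      using sorted_list_of_set.idem_if_sorted_distinct[of "map h zs"] by (simp add: strict_sorted_iff)
    moreover have "set (map h zs) \<in> nsets H r"
      using \<open>strict_sorted (map h zs)\<close> zs range distinct_card[of "map h zs"]
      by (auto simp: nsets_def strict_sorted_iff)
    ultimately have "\<phi> (\<chi> (map h zs)) = i"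
      using hom unfolding f_def by force
    then show "\<chi> (map h zs) = inv \<phi> i"
      using \<phi> by (metis bij_betw_imp_inj_on inv_f_f)
  qed
qed

lemma distinguishing_vertex:
  assumes wf: "wf_graph G" and C: "clique G C" and "a \<in> C" "b \<in> C"
    and "closed_nbhd G a \<noteq> closed_nbhd G b"
  obtains z where "z \<in> verts G - C" "adj G a z \<noteq> adj G b z"
proof -
  have "a \<in> verts G" "b \<in> verts G"
    using assms(3,4) C by (auto simp: Defs.clique_def)
  have "C \<subseteq> closed_nbhd G a" "C \<subseteq> closed_nbhd G b"
    using C assms(3,4) clique_adj[OF C] mem_closed_nbhd[OF wf] by blast+
  obtain z where z: "z \<in> closed_nbhd G a \<longleftrightarrow> z \<notin> closed_nbhd G b"
    using assms(5) unfolding set_eq_iff by blast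
  then have "z \<in> verts G"
    using closed_nbhd_subset_verts[OF \<open>a \<in> verts G\<close>] closed_nbhd_subset_verts[OF \<open>b \<in> verts G\<close>]
    by blast
  moreover have "z \<notin> C"
    using z \<open>C \<subseteq> closed_nbhd G a\<close> \<open>C \<subseteq> closed_nbhd G b\<close> by blast
  moreover have "adj G a z \<noteq> adj G b z"
    using z \<open>z \<notin> C\<close> assms(3,4) by (auto simp: mem_closed_nbhd[OF wf])
  ultimately show ?thesis
    using that by blast
qed

lemma ramsey_quadruples:
  fixes R :: "nat \<Rightarrow> nat \<Rightarrow> bool" and P Q :: "nat \<Rightarrow> nat \<Rightarrow> nat \<Rightarrow> bool"
    and S :: "nat \<Rightarrow> nat \<Rightarrow> nat \<Rightarrow> nat \<Rightarrow> bool"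
  assumes "partn_lst {..<M} (replicate (card (UNIV :: (bool \<times> bool \<times> bool \<times> bool) set)) L) 4"
  obtains h r p q s where "strict_mono_on {..<L} h" "h ` {..<L} \<subseteq> {..<M}"
    "\<And>i j k l. i < j \<Longrightarrow> j < k \<Longrightarrow> k < l \<Longrightarrow> l < L \<Longrightarrow>
      R (h i) (h j) = r \<and> P (h i) (h j) (h k) = p \<and> Q (h i) (h j) (h k) = q \<and> S (h i) (h j) (h k) (h l) = s"
proof -
  define \<chi> :: "nat list \<Rightarrow> bool \<times> bool \<times> bool \<times> bool" where
    "\<chi> zs = (R (zs!0) (zs!1), P (zs!0) (zs!1) (zs!2), Q (zs!0) (zs!1) (zs!2), S (zs!0) (zs!1) (zs!2) (zs!3))"
    for zs
  obtain h c where h: "strict_mono_on {..<L} h" "h ` {..<L} \<subseteq> {..<M}"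
    and hom: "\<And>zs. strict_sorted zs \<Longrightarrow> length zs = 4 \<Longrightarrow> set zs \<subseteq> {..<L} \<Longrightarrow> \<chi> (map h zs) = c"
    using ordered_ramsey[where \<chi> = \<chi>, OF assms] by blast
  obtain r p q s where c: "c = (r, p, q, s)"
    by (cases c) blast
  show thesis
  proof (rule that[OF h])
    fix i j k l :: nat assume "i < j" "j < k" "k < l" "l < L"
    then show "R (h i) (h j) = r \<and> P (h i) (h j) (h k) = p \<and> Q (h i) (h j) (h k) = q \<and>
        S (h i) (h j) (h k) (h l) = s"
      using hom[of "[i, j, k, l]"] by (simp add: \<chi>_def c)
  qed
qed

text \<open>Choosing \<open>xs t\<close> within the pair
  \<open>u (h (2t))\<close>, \<open>u (h (2t+1))\<close>, which \<open>ys t\<close> separates, sets the diagonal value.\<close>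
locale homogeneous_distinguishers =
  fixes G :: "'a graph" and n M :: nat and u :: "nat \<Rightarrow> 'a" and w :: "nat \<Rightarrow> nat \<Rightarrow> 'a"
    and h :: "nat \<Rightarrow> nat" and r p q s :: bool
  assumes wf: "wf_graph G"
    and clique: "clique G (u ` {..<M})" and u_inj: "inj_on u {..<M}"
    and distinguishes: "\<And>a b. a < M \<Longrightarrow> b < M \<Longrightarrow> a \<noteq> b \<Longrightarrow>
      w a b \<in> verts G - u ` {..<M} \<and> adj G (u a) (w a b) \<noteq> adj G (u b) (w a b)"
    and h_mono: "strict_mono_on {..<2*n+6} h" and h_range: "h ` {..<2*n+6} \<subseteq> {..<M}"
    and homogeneous: "\<And>i j k l. i < j \<Longrightarrow> j < k \<Longrightarrow> k < l \<Longrightarrow> l < 2*n+6 \<Longrightarrow>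
      adj G (u (h i)) (w (h i) (h j)) = r \<and> adj G (u (h k)) (w (h i) (h j)) = p \<and>
      adj G (u (h i)) (w (h j) (h k)) = q \<and> adj G (w (h i) (h j)) (w (h k) (h l)) = s"
begin

definition diag :: bool where
  "diag \<longleftrightarrow> (p = q \<longrightarrow> \<not> p)"

definition offset :: nat where
  "offset = (if r = diag then 0 else 1)"

definition xs :: "nat \<Rightarrow> 'a" where
  "xs t = u (h (2*t + offset))"

definition ys :: "nat \<Rightarrow> 'a" where
  "ys t = w (h (2*t)) (h (2*t+1))"

lemma offset_le_1: "offset \<le> 1"
  by (simp add: offset_def)

lemma h_less: "i < j \<Longrightarrow> j < 2*n+6 \<Longrightarrow> h i < h j"
  using strict_mono_onD[OF h_mono] by auto

lemma h_less_M: "i < 2*n+6 \<Longrightarrow> h i < M"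
  using h_range by auto

lemma xs_in_clique: "t \<in> {1..n+1} \<Longrightarrow> xs t \<in> u ` {..<M}"
  using h_less_M[of "2*t + offset"] offset_le_1 by (auto simp: xs_def)

lemma ys_distinguishes:
  assumes "t \<in> {1..n+1}"
  shows "ys t \<in> verts G - u ` {..<M} \<and> adj G (u (h (2*t))) (ys t) \<noteq> adj G (u (h (2*t+1))) (ys t)"
  unfolding ys_def using assms h_less_M h_less[of "2*t" "2*t+1"] by (intro distinguishes) auto

lemma xs_inj: "inj_on xs {1..n+1}"
proof (rule inj_onI)
  fix i j assume ij: "i \<in> {1..n+1}" "j \<in> {1..n+1}" and "xs i = xs j"
  then have "h (2*i + offset) = h (2*j + offset)"
    using inj_onD[OF u_inj] h_less_M[of "2*i + offset"] h_less_M[of "2*j + offset"] offset_le_1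
    by (auto simp: xs_def)
  then show "i = j"
    using h_less[of "2*i + offset" "2*j + offset"] h_less[of "2*j + offset" "2*i + offset"] ij offset_le_1
    by (cases i j rule: linorder_cases) auto
qed

lemma adj_xs_ys:
  assumes ij: "i \<in> {1..n+1}" "j \<in> {1..n+1}"
  shows "adj G (xs i) (ys j) \<longleftrightarrow> (if i = j then diag else if j < i then p else q)"
proof -
  consider "i = j" | "j < i" | "i < j"
    by linarith
  then show ?thesis
  proof cases
    case 1
    have "adj G (u (h (2*j))) (ys j) = r"
      using homogeneous[of "2*j" "2*j+1" "2*j+2" "2*j+3"] ij by (simp add: ys_def)
    moreover have "xs j = (if r = diag then u (h (2*j)) else u (h (2*j+1)))"
      by (simp add: xs_def offset_def)
    ultimately show ?thesis
      using 1 ys_distinguishes[OF ij(2)] by auto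
  next
    case 2
    then show ?thesis
      using homogeneous[of "2*j" "2*j+1" "2*i+offset" "2*i+offset+1"] ij offset_le_1
      by (simp add: xs_def ys_def)
  next
    case 3
    then show ?thesis
      using homogeneous[of "2*i+offset" "2*j" "2*j+1" "2*j+2"] ij offset_le_1
      by (simp add: xs_def ys_def)
  qed
qed

sublocale homogeneous_sequences G n xs ys diag p q s
proof
  show "wf_graph G" "inj_on xs {1..n+1}" "diag \<longleftrightarrow> (p = q \<longrightarrow> \<not> p)"
    by (rule wf, rule xs_inj, rule diag_def)
  show "xs ` {1..n+1} \<subseteq> verts G" "ys ` {1..n+1} \<subseteq> verts G"
    using xs_in_clique ys_distinguishes clique by (auto simp: Defs.clique_def)
  fix i j assume ij: "i \<in> {1..n+1}" "j \<in> {1..n+1}"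
  show "xs i \<noteq> ys j"
    using xs_in_clique[OF ij(1)] ys_distinguishes[OF ij(2)] by auto
  show "adj G (xs i) (xs j)" if "i \<noteq> j"
    using clique_adj[OF clique xs_in_clique[OF ij(1)] xs_in_clique[OF ij(2)]]
      inj_on_contraD[OF xs_inj that ij] by blast
  show "adj G (ys i) (ys j) \<longleftrightarrow> s" if "i < j"
    using homogeneous[of "2*i" "2*i+1" "2*j" "2*j+1"] ij that by (simp add: ys_def)
  show "adj G (xs i) (ys j) \<longleftrightarrow> (if i = j then diag else if j < i then p else q)"
    by (rule adj_xs_ys[OF ij])
qed

end

lemma nontwin_clique_contains_obstruction:
  assumes wf: "wf_graph G" and C: "clique G C" "finite C" and nontwin: "inj_on (closed_nbhd G) C"
    and ramsey: "partn_lst {..<card C}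
      (replicate (card (UNIV :: (bool \<times> bool \<times> bool \<times> bool) set)) (2*n+6)) 4"
  shows "contains_obstruction G n"
proof -
  let ?M = "card C"
  obtain u where u: "bij_betw u {..<?M} C"
    using ex_bij_betw_nat_finite[OF C(2)] by (auto simp: atLeast0LessThan)
  have u_inj: "inj_on u {..<?M}" and C_u: "C = u ` {..<?M}"
    using u by (auto simp: bij_betw_def)
  have "\<exists>z. z \<in> verts G - C \<and> adj G (u a) z \<noteq> adj G (u b) z"
    if "a < ?M" "b < ?M" "a \<noteq> b" for a b
  proof -
    have "u a \<in> C" "u b \<in> C" "u a \<noteq> u b"
      using that u_inj C_u by (auto dest: inj_onD)
    then show ?thesis
      using distinguishing_vertex[OF wf C(1)] inj_onD[OF nontwin] by metis
  qed
  then obtain w where w: "\<And>a b. a < ?M \<Longrightarrow> b < ?M \<Longrightarrow> a \<noteq> b \<Longrightarrow>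
      w a b \<in> verts G - C \<and> adj G (u a) (w a b) \<noteq> adj G (u b) (w a b)"
    by metis
  obtain h r p q s where h: "strict_mono_on {..<2*n+6} h" "h ` {..<2*n+6} \<subseteq> {..<?M}"
    and hom: "\<And>i j k l. i < j \<Longrightarrow> j < k \<Longrightarrow> k < l \<Longrightarrow> l < 2*n+6 \<Longrightarrow>
      adj G (u (h i)) (w (h i) (h j)) = r \<and> adj G (u (h k)) (w (h i) (h j)) = p \<and>
      adj G (u (h i)) (w (h j) (h k)) = q \<and> adj G (w (h i) (h j)) (w (h k) (h l)) = s"
    using ramsey_quadruples[where R = "\<lambda>a b. adj G (u a) (w a b)" and P = "\<lambda>a b c. adj G (u c) (w a b)"
        and Q = "\<lambda>a b c. adj G (u a) (w b c)" and S = "\<lambda>a b c e. adj G (w a b) (w c e)", OF ramsey]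
    by blast
  interpret homogeneous_distinguishers G n ?M u w h r p q s
  proof (unfold_locales; (rule wf u_inj h hom)?)
    show "clique G (u ` {..<?M})"
      using C(1) C_u by simp
    fix a b assume "a < ?M" "b < ?M" "a \<noteq> b"
    then show "w a b \<in> verts G - u ` {..<?M} \<and> adj G (u a) (w a b) \<noteq> adj G (u b) (w a b)"
      using w C_u by simp
  qed
  show ?thesis
    by (rule contains_obstruction)
qed

lemma twin_class_representatives:
  assumes wf: "wf_graph G" and v: "v \<in> verts G"
  obtains R where "R \<subseteq> closed_nbhd G v" "card R = twin_degree G v" "inj_on (closed_nbhd G) R"
proof -
  have "twin_class G ` closed_nbhd G v \<subseteq> twin_class G ` closed_nbhd G v"
    by (rule subset_refl)
  then obtain R where R: "R \<subseteq> closed_nbhd G v" "inj_on (twin_class G) R"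
      "twin_class G ` closed_nbhd G v = twin_class G ` R"
    unfolding subset_image_inj by blast
  have "card R = twin_degree G v"
    unfolding twin_degree_def R(3) using R(2) by (rule card_image[symmetric])
  moreover have "inj_on (closed_nbhd G) R"
  proof (rule inj_onI)
    fix a b assume "a \<in> R" "b \<in> R" "closed_nbhd G a = closed_nbhd G b"
    moreover have "R \<subseteq> verts G"
      using R(1) closed_nbhd_subset_verts[OF v] by blast
    ultimately show "a = b"
      using inj_onD[OF R(2)] by (simp add: twin_class_eq_iff subsetD)
  qed
  ultimately show thesis
    using that R(1) by blast
qed

text \<open>By Ramsey's theorem, representatives of the twin classes meeting \<open>N[v]\<close> contain either
  many independent neighbours of \<open>v\<close>, which form a star, or a large clique of pairwise non-twins.\<close>
lemma large_twin_degree_contains_obstruction: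
  obtains N where "\<And>(G :: 'a graph) v. wf_graph G \<Longrightarrow> v \<in> verts G \<Longrightarrow> N \<le> twin_degree G v \<Longrightarrow>
    contains_obstruction G n"
proof -
  obtain M :: nat where M: "partn_lst {..<M}
      (replicate (card (UNIV :: (bool \<times> bool \<times> bool \<times> bool) set)) (2*n+6)) 4"
    using ramsey_full by blast
  obtain N where N: "\<forall>(V :: 'a set) E. finite V \<and> N \<le> card V \<longrightarrow>
      (\<exists>R\<subseteq>V. card R = M \<and> Ramsey.clique R E \<or> card R = n+1 \<and> Ramsey.indep R E)"
    using ramsey2[of M "n+1"] by blast
  show thesis
  proof (rule that[of N])
    fix G :: "'a graph" and v
    assume wf: "wf_graph G" and v: "v \<in> verts G" and big: "N \<le> twin_degree G v"
    obtain R0 where R0: "R0 \<subseteq> closed_nbhd G v" "card R0 = twin_degree G v" "inj_on (closed_nbhd G) R0"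
      by (rule twin_class_representatives[OF wf v])
    have "finite R0"
      using R0(1) finite_closed_nbhd[OF wf v] by (rule finite_subset)
    with R0(2) big have "finite R0 \<and> N \<le> card R0"
      by simp
    from N[rule_format, OF this, of "edges G"] obtain R where R: "R \<subseteq> R0"
      and "card R = M \<and> Ramsey.clique R (edges G) \<or> card R = n+1 \<and> Ramsey.indep R (edges G)"
      by blast
    moreover have RV: "R \<subseteq> verts G"
      using R R0(1) closed_nbhd_subset_verts[OF v] by blast
    moreover have "finite R"
      using R \<open>finite R0\<close> by (rule finite_subset)
    ultimately show "contains_obstruction G n"
    proof (elim disjE conjE)
      assume "card R = M" "Ramsey.clique R (edges G)"
      then show ?thesis
        using nontwin_clique_contains_obstruction[OF wf _ \<open>finite R\<close> inj_on_subset[OF R0(3) R]] M RV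
        by (auto simp: Defs.clique_def Ramsey.clique_def adj_def)
    next
      assume "card R = n+1" "Ramsey.indep R (edges G)"
      have "\<not> adj G a b" if "a \<in> R" "b \<in> R" for a b
        using that \<open>Ramsey.indep R (edges G)\<close> adj_irrefl[OF wf, of a]
        by (cases "a = b") (auto simp: Ramsey.indep_def adj_def)
      then have "independent G (R - {v})"
        using RV by (auto simp: independent_def)
      moreover have "\<forall>l\<in>R - {v}. adj G v l"
        using R R0(1) by (auto simp: mem_closed_nbhd[OF wf])
      moreover have "n \<le> card (R - {v})"
        using \<open>card R = n+1\<close> \<open>finite R\<close> by (simp add: card_Diff_singleton_if)
      ultimately have "contains_induced G (star_graph n)"
        using \<open>finite R\<close> by (intro contains_star_graph[OF wf v]) auto
      then show ?thesis
        by (simp add: contains_obstruction_def)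
    qed
  qed
qed

lemma bounded_on_le_mono:
  assumes "bounded_on \<G> f" and "mono F" and "\<And>G. G \<in> \<G> \<Longrightarrow> g G \<le> F (f G)"
  shows "bounded_on \<G> g"
  using assms unfolding bounded_on_def mono_def by (meson le_trans)

lemma bounded_on_le_mult:
  assumes "bounded_on \<G> f" and "bounded_on \<G> g" and "\<And>G. G \<in> \<G> \<Longrightarrow> h G \<le> f G * g G"
  shows "bounded_on \<G> h"
  using assms unfolding bounded_on_def by (meson le_trans mult_le_mono)

lemma common_bound_iff_bounded_on:
  "(\<exists>k. \<forall>G\<in>\<G>. f G \<le> k \<and> g G \<le> k) \<longleftrightarrow> bounded_on \<G> f \<and> bounded_on \<G> g"
  unfolding bounded_on_def by (meson le_trans max.cobounded1 max.cobounded2)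

context
  fixes \<G> :: "'a graph set"
  assumes wf: "\<And>G. G \<in> \<G> \<Longrightarrow> wf_graph G"
begin

lemma bounded_twin_degree_iff_clique_sparse:
  "bounded_on \<G> max_twin_degree \<longleftrightarrow> bounded_on \<G> omega_tilde \<and> bounded_on \<G> cideg"
proof
  assume bounded: "bounded_on \<G> max_twin_degree"
  show "bounded_on \<G> omega_tilde \<and> bounded_on \<G> cideg"
  proof
    show "bounded_on \<G> omega_tilde"
      by (rule bounded_on_le_mono[where F = "\<lambda>k. k", OF bounded _ omega_tilde_le_max_twin_degree[OF wf]])
         (simp add: mono_def)
    show "bounded_on \<G> cideg"
      by (rule bounded_on_le_mono[where F = "\<lambda>k. 2 ^ k", OF bounded _ cideg_le_pow_max_twin_degree[OF wf]])
         (simp add: mono_def)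
  qed
next
  assume "bounded_on \<G> omega_tilde \<and> bounded_on \<G> cideg"
  then show "bounded_on \<G> max_twin_degree"
    using bounded_on_le_mult[of _ cideg omega_tilde] max_twin_degree_le
      twin_degree_le_cideg_mult_omega_tilde[OF wf] by metis
qed

lemma bounded_twin_degree_iff_bounded_max_degree_twin_reduction:
  "bounded_on \<G> max_twin_degree \<longleftrightarrow> bounded_on \<G> (\<lambda>G. max_degree (twin_reduction G))"
proof
  assume bounded: "bounded_on \<G> max_twin_degree"
  show "bounded_on \<G> (\<lambda>G. max_degree (twin_reduction G))"
    by (rule bounded_on_le_mono[where F = "\<lambda>k. k",
          OF bounded _ max_degree_twin_reduction_le_max_twin_degree[OF wf]])
       (simp add: mono_def)
next
  assume bounded: "bounded_on \<G> (\<lambda>G. max_degree (twin_reduction G))"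
  show "bounded_on \<G> max_twin_degree"
    by (rule bounded_on_le_mono[where F = "\<lambda>k. k + 1",
          OF bounded _ max_twin_degree_le_Suc_max_degree_twin_reduction[OF wf]])
       (simp add: mono_def)
qed

lemma bounded_cdeg_iff_clique_sparse:
  "bounded_on \<G> cdeg \<longleftrightarrow> bounded_on \<G> omega_tilde \<and> bounded_on \<G> cideg"
proof
  assume bounded: "bounded_on \<G> cdeg"
  show "bounded_on \<G> omega_tilde \<and> bounded_on \<G> cideg"
  proof
    show "bounded_on \<G> omega_tilde"
      by (rule bounded_on_le_mono[where F = "\<lambda>k. 2 ^ (k + 1)", OF bounded _ omega_tilde_le_pow_Suc_cdeg[OF wf]])
         (simp add: mono_def del: power_Suc)
    show "bounded_on \<G> cideg"
      by (rule bounded_on_le_mono[where F = "\<lambda>k. k + 1", OF bounded _ cideg_le_Suc_cdeg[OF wf]])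
         (simp add: mono_def)
  qed
next
  assume "bounded_on \<G> omega_tilde \<and> bounded_on \<G> cideg"
  then show "bounded_on \<G> cdeg"
    using bounded_on_le_mult[of _ cideg omega_tilde] cdeg_le_cideg_mult_omega_tilde[OF wf] by metis
qed

lemma bounded_theta_star_if_bounded_cideg:
  assumes "bounded_on \<G> cideg"
  shows "bounded_on \<G> theta_star"
  by (rule bounded_on_le_mono[where F = "\<lambda>k. k", OF assms _ theta_star_le_cideg[OF wf]]) (simp add: mono_def)

lemma bounded_alpha_star_if_bounded_theta_star:
  assumes "bounded_on \<G> theta_star"
  shows "bounded_on \<G> alpha_star"
  by (rule bounded_on_le_mono[where F = "\<lambda>k. k", OF assms _ alpha_star_le_theta_star[OF wf]])
     (simp add: mono_def)

lemma excludes_obstruction_if_bounded: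
  assumes "bounded_on \<G> omega_tilde" and "bounded_on \<G> alpha_star"
  shows "\<exists>n. \<forall>G\<in>\<G>. \<not> contains_obstruction G n"
proof -
  obtain k l where bounds: "\<forall>G\<in>\<G>. omega_tilde G \<le> k" "\<forall>G\<in>\<G>. alpha_star G \<le> l"
    using assms unfolding bounded_on_def by blast
  have "\<not> contains_obstruction G (k + l + 1)" if "G \<in> \<G>" for G
  proof
    assume "contains_obstruction G (k + l + 1)"
    then have "k + l + 1 \<le> alpha_star G \<or> k + l + 1 \<le> omega_tilde G"
      by (rule obstruction_le_alpha_star_or_omega_tilde[OF wf[OF that]])
    moreover have "omega_tilde G \<le> k" "alpha_star G \<le> l"
      using bounds that by blast+
    ultimately show False
      by auto
  qed
  then show ?thesis
    by blast
qed

lemma bounded_twin_degree_if_excludes_obstruction: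
  assumes "\<forall>G\<in>\<G>. \<not> contains_obstruction G n"
  shows "bounded_on \<G> max_twin_degree"
proof -
  obtain N where N: "\<And>(G :: 'a graph) v. wf_graph G \<Longrightarrow> v \<in> verts G \<Longrightarrow> N \<le> twin_degree G v \<Longrightarrow>
      contains_obstruction G n"
    using large_twin_degree_contains_obstruction by blast
  have "max_twin_degree G \<le> N" if "G \<in> \<G>" for G
  proof (rule max_twin_degree_le)
    fix v assume "v \<in> verts G"
    show "twin_degree G v \<le> N"
    proof (rule ccontr)
      assume "\<not> twin_degree G v \<le> N"
      then have "contains_obstruction G n"
        using N[OF wf[OF that] \<open>v \<in> verts G\<close>] by simp
      then show False
        using assms that by blast
    qed
  qed
  then show ?thesis
    unfolding bounded_on_def by blast
qed

end

theorem theorem1p5: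
  fixes \<G> :: "'a graph set"
  assumes graphs: "\<forall>G\<in>\<G>. wf_graph G"
    and her: "hereditary \<G>"
  defines "P1 \<equiv> (\<exists>k. \<forall>G\<in>\<G>. omega_tilde G \<le> k \<and> cideg G \<le> k)"
    and "P2 \<equiv> (\<exists>d. \<forall>G\<in>\<G>. max_degree (twin_reduction G) \<le> d)"
    and "P3 \<equiv> bounded_on \<G> omega_tilde \<and> bounded_on \<G> alpha_star"
    and "P4 \<equiv> bounded_on \<G> omega_tilde \<and> bounded_on \<G> theta_star"
    and "P5 \<equiv> bounded_on \<G> cdeg"
    and "P6 \<equiv> (\<exists>n. \<forall>G\<in>\<G>. \<not> contains_induced G (star_graph n) \<and>
                 \<not> contains_induced G (matching_KI n) \<and> \<not> contains_induced G (matching_KK n) \<and>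
                 \<not> contains_induced G (antimatching_KK n) \<and> \<not> contains_induced G (halfgraph_KK n))"
  shows "(P1 \<longleftrightarrow> P2) \<and> (P1 \<longleftrightarrow> P3) \<and> (P1 \<longleftrightarrow> P4) \<and> (P1 \<longleftrightarrow> P5) \<and> (P1 \<longleftrightarrow> P6)"
proof -
  have wf: "\<And>G. G \<in> \<G> \<Longrightarrow> wf_graph G"
    using graphs by blast
  have P1: "P1 \<longleftrightarrow> bounded_on \<G> omega_tilde \<and> bounded_on \<G> cideg"
    unfolding P1_def by (rule common_bound_iff_bounded_on)
  have P6: "P6 \<longleftrightarrow> (\<exists>n. \<forall>G\<in>\<G>. \<not> contains_obstruction G n)"
    unfolding P6_def contains_obstruction_def by simp
  have "P1 \<longleftrightarrow> bounded_on \<G> max_twin_degree"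
    using P1 bounded_twin_degree_iff_clique_sparse[OF wf] by simp
  moreover have "P2 \<longleftrightarrow> bounded_on \<G> max_twin_degree"
    using bounded_twin_degree_iff_bounded_max_degree_twin_reduction[OF wf]
    by (simp add: P2_def bounded_on_def)
  moreover have "P5 \<longleftrightarrow> P1"
    unfolding P5_def using P1 bounded_cdeg_iff_clique_sparse[OF wf] by simp
  moreover have "P1 \<Longrightarrow> P4"
    unfolding P4_def using P1 bounded_theta_star_if_bounded_cideg[OF wf] by blast
  moreover have "P4 \<Longrightarrow> P3"
    unfolding P3_def P4_def using bounded_alpha_star_if_bounded_theta_star[OF wf] by blast
  moreover have "P3 \<Longrightarrow> P6"
    unfolding P3_def P6 using excludes_obstruction_if_bounded[OF wf] by blast
  moreover have "P6 \<Longrightarrow> bounded_on \<G> max_twin_degree"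
    unfolding P6 using bounded_twin_degree_if_excludes_obstruction[OF wf] by blast
  ultimately show ?thesis
    by blast
qed

end
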